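(* The unrestricted black box complexity of the class of affine OneMax functions satisfies $B_{\mathcal{F}}=\Omega(n/\log n)$.
   Context: Identify $\{0,1\}$ with $\mathbb{F}_2$. $\ell(x)=\sum_{i=1}^n x_i$ (real sum). $\mathcal{F}$ is the set of functions $f(x)=\ell(Mx+b)$ on $\{0,1\}^n$ with $M\in\mathrm{GL}(n,\mathbb{F}_2)$, $b\in\mathbb{F}_2^n$ ($Mx+b$ over $\mathbb{F}_2$). For a class $\mathcal{C}$ of functions $\{0,1\}^n\to\mathbb{R}$, its (unrestricted) black box complexity is $B_{\mathcal{C}}=\inf_{A}\sup_{f\in\mathcal{C}}\mathbb{E}(T(A,f))$, where $A$ ranges over all randomized black-box search algorithms and $T(A,f)$ is the number of evaluations of $f$ made by $A$ until a global maximizer of $f$ is evaluated for the first time. *)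

theory Defs
  imports "HOL-Probability.Probability"
begin

text \<open>Search points: {0,1}^n as boolean lists of length n (True = 1).\<close>
definition points :: "nat \<Rightarrow> bool list set" where
  "points n = {x. length x = n}"

definition onemax :: "bool list \<Rightarrow> real" where
  "onemax x = real (count_list x True)"

text \<open>n x n matrices over F_2 (only entries with indices < n matter), products over F_2.\<close>
definition mat_vec :: "nat \<Rightarrow> (nat \<Rightarrow> nat \<Rightarrow> bool) \<Rightarrow> bool list \<Rightarrow> bool list" where
  "mat_vec n M x = map (\<lambda>i. odd (card {j. j < n \<and> M i j \<and> x ! j})) [0..<n]"

definition mat_mult :: "nat \<Rightarrow> (nat \<Rightarrow> nat \<Rightarrow> bool) \<Rightarrow> (nat \<Rightarrow> nat \<Rightarrow> bool) \<Rightarrow> nat \<Rightarrow> nat \<Rightarrow> bool" where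
  "mat_mult n M N = (\<lambda>i k. odd (card {j. j < n \<and> M i j \<and> N j k}))"

definition GL2 :: "nat \<Rightarrow> (nat \<Rightarrow> nat \<Rightarrow> bool) set" where
  "GL2 n = {M. \<exists>N. \<forall>i<n. \<forall>k<n.
      mat_mult n M N i k = (i = k) \<and> mat_mult n N M i k = (i = k)}"

definition vec_add :: "bool list \<Rightarrow> bool list \<Rightarrow> bool list" where
  "vec_add x y = map2 (\<lambda>a b. a \<noteq> b) x y"

definition affine_onemax :: "nat \<Rightarrow> (bool list \<Rightarrow> real) set" where
  "affine_onemax n = {(\<lambda>x. onemax (vec_add (mat_vec n M x) b)) | M b.
      M \<in> GL2 n \<and> b \<in> points n}"

text \<open>A randomized black-box algorithm: given the history of queried points and their
  f-values, it outputs a probability distribution of the next query in {0,1}^n.\<close>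
type_synonym algorithm = "(bool list \<times> real) list \<Rightarrow> bool list pmf"

definition bb_algs :: "nat \<Rightarrow> algorithm set" where
  "bb_algs n = {A. \<forall>h. set_pmf (A h) \<subseteq> points n}"

definition maximizers :: "nat \<Rightarrow> (bool list \<Rightarrow> real) \<Rightarrow> bool list set" where
  "maximizers n f = {x \<in> points n. \<forall>y \<in> points n. f y \<le> f x}"

text \<open>surv A f S t h: probability that, starting from history h, none of the next t
  queries lies in S.\<close>
primrec surv :: "algorithm \<Rightarrow> (bool list \<Rightarrow> real) \<Rightarrow> bool list set \<Rightarrow> nat \<Rightarrow>
    (bool list \<times> real) list \<Rightarrow> ennreal" where
  "surv A f S 0 h = 1"
| "surv A f S (Suc t) h =
     (\<integral>\<^sup>+ x. (if x \<in> S then 0 else surv A f S t (h @ [(x, f x)])) \<partial>measure_pmf (A h))"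

text \<open>Expected number of evaluations until a global maximizer is first evaluated:
  E[T] = sum over t \<ge> 0 of P(T > t).\<close>
definition runtime :: "nat \<Rightarrow> algorithm \<Rightarrow> (bool list \<Rightarrow> real) \<Rightarrow> ennreal" where
  "runtime n A f = (\<Sum>t. surv A f (maximizers n f) t [])"

definition bb_complexity :: "nat \<Rightarrow> (bool list \<Rightarrow> real) set \<Rightarrow> ennreal" where
  "bb_complexity n C = (INF A \<in> bb_algs n. SUP f \<in> C. runtime n A f)"

end

theory Submission
  imports Defs "HOL-Real_Asymp.Real_Asymp"
begin

(* Restrict to the 2^n translates f_z(x) = OneMax(x + not z), which count the positions where x
   agrees with z and have the single maximiser z. Every answer of f_z lies in {0, ..., n}, so per
   query the run of an algorithm branches at most (n+1)-fold; summed over all z, the probability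
   of having queried the target within t steps is therefore at most (n+2)^t. If 2 (n+2)^T <= 2^n,
   then for each t < T the target is on average still unfound with probability at least 1/2, so
   some f_z needs expected time at least T/2; T is about n ln 2 / ln n. *)

primrec hit_prob :: "algorithm \<Rightarrow> (bool list \<Rightarrow> real) \<Rightarrow> bool list set \<Rightarrow> nat \<Rightarrow>
    (bool list \<times> real) list \<Rightarrow> ennreal" where
  "hit_prob A f S 0 h = 0"
| "hit_prob A f S (Suc t) h =
     (\<integral>\<^sup>+ x. (if x \<in> S then 1 else hit_prob A f S t (h @ [(x, f x)])) \<partial>measure_pmf (A h))"

lemma surv_add_hit_prob: "surv A f S t h + hit_prob A f S t h = 1"
proof (induction t arbitrary: h)
  case (Suc t)
  have "surv A f S (Suc t) h + hit_prob A f S (Suc t) h =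
    (\<integral>\<^sup>+ x. (if x \<in> S then 0 else surv A f S t (h @ [(x, f x)])) +
      (if x \<in> S then 1 else hit_prob A f S t (h @ [(x, f x)])) \<partial>measure_pmf (A h))"
    by (simp add: nn_integral_add)
  also have "\<dots> = (\<integral>\<^sup>+ x. 1 \<partial>measure_pmf (A h))"
    by (rule nn_integral_cong) (simp add: Suc.IH)
  finally show ?case by simp
qed simp

lemma sum_hit_prob_le:
  assumes "finite Z" "finite V" "\<And>z x. z \<in> Z \<Longrightarrow> F z x \<in> V"
  shows "(\<Sum>z\<in>Z. hit_prob A (F z) {z} t h) \<le> of_nat ((card V + 1) ^ t)"
proof (induction t arbitrary: h)
  case (Suc t)
  let ?H = "\<lambda>z x v. hit_prob A (F z) {z} t (h @ [(x, v)])"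
  \<comment> \<open>The query x is the target of at most one z; for all others only the answer matters.\<close>
  have step: "(\<Sum>z\<in>Z. if x \<in> {z} then 1 else ?H z x (F z x)) \<le> of_nat ((card V + 1) ^ Suc t)" for x
  proof -
    have "(\<Sum>z\<in>Z. if x \<in> {z} then 1 else ?H z x (F z x))
        \<le> (\<Sum>z\<in>Z. (if x = z then 1 else 0) + (\<Sum>v\<in>V. ?H z x v))"
    proof (rule sum_mono)
      fix z assume "z \<in> Z"
      then have "?H z x (F z x) \<le> (\<Sum>v\<in>V. ?H z x v)"
        using assms by (intro member_le_sum) auto
      then show "(if x \<in> {z} then 1 else ?H z x (F z x)) \<le> (if x = z then 1 else 0) + (\<Sum>v\<in>V. ?H z x v)"
        by (auto intro: add_increasing)
    qed
    also have "\<dots> = (\<Sum>z\<in>Z. if x = z then 1 else 0) + (\<Sum>v\<in>V. \<Sum>z\<in>Z. ?H z x v)"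
      by (simp add: sum.distrib sum.swap[of _ Z])
    also have "\<dots> \<le> 1 + (\<Sum>v\<in>V. of_nat ((card V + 1) ^ t))"
      using assms(1) by (intro add_mono sum_mono Suc.IH) (simp add: sum.delta)
    also have "\<dots> = of_nat (1 + card V * (card V + 1) ^ t)"
      by simp
    also have "\<dots> \<le> of_nat ((card V + 1) ^ Suc t)"
      by (simp only: of_nat_le_iff) simp
    finally show ?thesis .
  qed
  have "(\<Sum>z\<in>Z. hit_prob A (F z) {z} (Suc t) h)
     = (\<integral>\<^sup>+ x. (\<Sum>z\<in>Z. if x \<in> {z} then 1 else ?H z x (F z x)) \<partial>measure_pmf (A h))"
    using assms(1) by (simp add: nn_integral_sum)
  also have "\<dots> \<le> (\<integral>\<^sup>+ x. of_nat ((card V + 1) ^ Suc t) \<partial>measure_pmf (A h))"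
    by (rule nn_integral_mono) (rule step)
  finally show ?case by simp
qed simp

lemma card_le_two_mul_sum_surv:
  assumes "finite Z" "finite V" "\<And>z x. z \<in> Z \<Longrightarrow> F z x \<in> V"
    and "2 * (card V + 1) ^ t \<le> card Z"
  shows "of_nat (card Z) \<le> 2 * (\<Sum>z\<in>Z. surv A (F z) {z} t h)"
proof -
  let ?s = "\<lambda>z. surv A (F z) {z} t h"
  have half: "2 * (of_nat ((card V + 1) ^ t) :: ennreal) \<le> of_nat (card Z)"
    using assms(4) by (metis of_nat_le_iff of_nat_mult of_nat_numeral)
  have "of_nat (card Z) = (\<Sum>z\<in>Z. ?s z + hit_prob A (F z) {z} t h)"
    by (simp add: surv_add_hit_prob)
  also have "\<dots> \<le> (\<Sum>z\<in>Z. ?s z) + of_nat ((card V + 1) ^ t)"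
    unfolding sum.distrib using assms(1-3) by (intro add_left_mono sum_hit_prob_le)
  finally have "2 * of_nat (card Z) \<le> 2 * ((\<Sum>z\<in>Z. ?s z) + of_nat ((card V + 1) ^ t))"
    by (rule mult_left_mono) simp
  also have "\<dots> = 2 * (\<Sum>z\<in>Z. ?s z) + 2 * of_nat ((card V + 1) ^ t)"
    by (rule distrib_left)
  also have "\<dots> \<le> 2 * (\<Sum>z\<in>Z. ?s z) + of_nat (card Z)"
    using half by (rule add_left_mono)
  finally show ?thesis
    by (simp add: mult_2 ennreal_add_left_cancel_le add.commute)
qed

lemma hitting_time_lower_bound:
  assumes "finite Z" "finite V" "\<And>z x. z \<in> Z \<Longrightarrow> F z x \<in> V"
    and "2 * (card V + 1) ^ T \<le> card Z"
  shows "of_nat T \<le> 2 * (SUP z\<in>Z. \<Sum>t. surv A (F z) {z} t [])"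
proof -
  let ?s = "\<lambda>z t. surv A (F z) {z} t []"
  define S where "S = (SUP z\<in>Z. \<Sum>t. ?s z t)"
  have "of_nat (card Z) \<le> 2 * (\<Sum>z\<in>Z. ?s z t)" if "t < T" for t
  proof (rule card_le_two_mul_sum_surv[OF assms(1-3)])
    have "(card V + 1) ^ t \<le> (card V + 1) ^ T"
      using that by (simp add: power_increasing)
    then show "2 * (card V + 1) ^ t \<le> card Z"
      using assms(4) by linarith
  qed
  then have "(\<Sum>t<T. of_nat (card Z)) \<le> (\<Sum>t<T. 2 * (\<Sum>z\<in>Z. ?s z t))"
    by (intro sum_mono) simp
  then have "of_nat (card Z) * of_nat T \<le> (\<Sum>t<T. 2 * (\<Sum>z\<in>Z. ?s z t))"
    by (simp add: mult.commute)
  also have "\<dots> = 2 * (\<Sum>z\<in>Z. \<Sum>t<T. ?s z t)"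
    by (simp add: sum_distrib_left sum.swap[of _ "{..<T}"])
  also have "\<dots> \<le> 2 * (\<Sum>z\<in>Z. S)"
  proof (intro mult_left_mono sum_mono)
    fix z assume "z \<in> Z"
    have "(\<Sum>t<T. ?s z t) \<le> (\<Sum>t. ?s z t)" by (rule sum_le_suminf) auto
    also have "\<dots> \<le> S" unfolding S_def using \<open>z \<in> Z\<close> by (rule SUP_upper)
    finally show "(\<Sum>t<T. ?s z t) \<le> S" .
  qed simp
  also have "\<dots> = of_nat (card Z) * (2 * S)"
    by (simp add: mult_ac)
  finally have "of_nat (card Z) * of_nat T \<le> of_nat (card Z) * (2 * S)" .
  moreover have "card Z > 0"
    using assms(4) by (rule less_le_trans[rotated]) simp
  ultimately show ?thesis
    unfolding S_def by (simp add: ennreal_mult_le_mult_iff)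
qed

lemma mat_vec_identity: "length x = n \<Longrightarrow> mat_vec n (=) x = x"
proof (rule nth_equalityI)
  fix i assume "length x = n" "i < length (mat_vec n (=) x)"
  then have "{j. j < n \<and> i = j \<and> x ! j} = (if x ! i then {i} else {})"
    by (auto simp: mat_vec_def)
  then show "mat_vec n (=) x ! i = x ! i"
    using \<open>i < length (mat_vec n (=) x)\<close> by (simp add: mat_vec_def)
qed (simp add: mat_vec_def)

lemma identity_in_GL2: "(=) \<in> GL2 n"
proof -
  have "mat_mult n (=) (=) i k = (i = k)" if "i < n" for i k
  proof -
    have "{j. j < n \<and> i = j \<and> j = k} = (if i = k then {i} else {})"
      using that by auto
    then show ?thesis by (simp add: mat_mult_def)
  qed
  then show ?thesis unfolding GL2_def by blast
qed

lemma finite_points: "finite (points n)"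
  using finite_lists_length_eq[of "UNIV :: bool set" n] by (simp add: points_def)

lemma card_points: "card (points n) = 2 ^ n"
  using card_lists_length_eq[of "UNIV :: bool set" n] by (simp add: points_def)

definition onemax_towards :: "nat \<Rightarrow> bool list \<Rightarrow> bool list \<Rightarrow> real" where
  "onemax_towards n z x = onemax (vec_add (mat_vec n (=) x) (map Not z))"

lemma onemax_towards_in_affine_onemax:
  "z \<in> points n \<Longrightarrow> onemax_towards n z \<in> affine_onemax n"
proof -
  assume "z \<in> points n"
  then have "map Not z \<in> points n" by (simp add: points_def)
  then show ?thesis
    unfolding affine_onemax_def onemax_towards_def using identity_in_GL2
    by (intro CollectI exI[of _ "(=)"] exI[of _ "map Not z"]) simp
qed

lemma onemax_towards_range: "onemax_towards n z x \<in> real ` {0..n}"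
proof -
  let ?d = "vec_add (mat_vec n (=) x) (map Not z)"
  have "length ?d \<le> n" by (simp add: vec_add_def mat_vec_def)
  then have "count_list ?d True \<le> n" using count_le_length[of ?d True] by linarith
  then show ?thesis unfolding onemax_towards_def onemax_def by (intro imageI) simp
qed

lemma onemax_towards_eq_card_agree:
  assumes "length x = n" "length z = n"
  shows "onemax_towards n z x = real (card {i. i < n \<and> x ! i = z ! i})"
proof -
  let ?d = "vec_add x (map Not z)"
  have "length ?d = n" "\<And>i. i < n \<Longrightarrow> ?d ! i = (x ! i = z ! i)"
    using assms by (auto simp: vec_add_def)
  then have "{i. i < length ?d \<and> True = ?d ! i} = {i. i < n \<and> x ! i = z ! i}"
    by auto
  then show ?thesis
    using assms
    by (simp only: onemax_towards_def onemax_def mat_vec_identity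
        count_list_eq_length_filter length_filter_conv_card)
qed

lemma maximizers_onemax_towards:
  assumes "z \<in> points n"
  shows "maximizers n (onemax_towards n z) = {z}"
proof -
  have z: "length z = n" using assms by (simp add: points_def)
  have agree_le: "card {i. i < n \<and> P i} \<le> n" for P
  proof -
    have "{i. i < n \<and> P i} \<subseteq> {..<n}" by auto
    then show ?thesis by (metis card_lessThan card_mono finite_lessThan)
  qed
  have all_agree: "x = z" if x: "length x = n" and "n \<le> card {i. i < n \<and> x ! i = z ! i}" for x
  proof -
    have "{i. i < n \<and> x ! i = z ! i} = {..<n}"
      using that agree_le[of "\<lambda>i. x ! i = z ! i"] by (intro card_subset_eq) auto
    then have "x ! i = z ! i" if "i < n" for i
      using that by (metis (mono_tags) lessThan_iff mem_Collect_eq)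
    then show ?thesis
      using x z by (simp add: nth_equalityI)
  qed
  have "onemax_towards n z y \<le> onemax_towards n z z" if "length y = n" for y
    using that z agree_le[of "\<lambda>i. y ! i = z ! i"] by (simp add: onemax_towards_eq_card_agree)
  moreover have "x = z" if "length x = n" "onemax_towards n z z \<le> onemax_towards n z x" for x
    using that z all_agree[of x] by (simp add: onemax_towards_eq_card_agree)
  ultimately show ?thesis
    using assms unfolding maximizers_def points_def by blast
qed

lemma power_le_two_power_if_ln_le:
  assumes "m > 0" "real T * ln (real m) \<le> real k * ln 2"
  shows "m ^ T \<le> (2::nat) ^ k"
proof -
  have "ln (real m ^ T) \<le> ln (2 ^ k)"
    using assms by (simp add: ln_realpow)
  then have "real m ^ T \<le> 2 ^ k"
    using assms(1) by simp
  then have "real (m ^ T) \<le> real (2 ^ k)"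
    by simp
  then show ?thesis
    by (simp only: of_nat_le_iff)
qed

definition query_budget :: "nat \<Rightarrow> nat" where
  "query_budget n = nat \<lfloor>(real n - 1) * ln 2 / ln (real n + 2)\<rfloor>"

lemma two_mul_power_query_budget_le:
  assumes "n \<ge> 1"
  shows "2 * (n + 2) ^ query_budget n \<le> (2::nat) ^ n"
proof -
  have ln_pos: "ln (real n + 2) > 0" by simp
  have "real (query_budget n) \<le> (real n - 1) * ln 2 / ln (real n + 2)"
    using assms unfolding query_budget_def by simp
  then have "real (query_budget n) * ln (real n + 2) \<le> (real n - 1) * ln 2"
    using ln_pos by (simp add: pos_le_divide_eq)
  then have "(n + 2) ^ query_budget n \<le> (2::nat) ^ (n - 1)"
    using assms by (intro power_le_two_power_if_ln_le) (simp_all add: of_nat_diff add.commute)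
  moreover have "(2::nat) ^ n = 2 * 2 ^ (n - 1)"
    using assms by (cases n) simp_all
  ultimately show ?thesis
    by simp
qed

lemma ln_2_ge_half: "ln (2::real) \<ge> 1/2"
  using ln_add1_ge[of 1] by simp

lemma query_budget_asymp:
  "\<forall>\<^sub>F n in sequentially. (1/8) * real n / ln (real n) \<le> real (query_budget n) / 2"
proof -
  \<comment> \<open>With ln 2 replaced by its lower bound 1/2, since real_asymp needs rational constants.\<close>
  have "\<forall>\<^sub>F x::real in at_top. (1/8) * x / ln x \<le> ((x - 1) * (1/2) / ln (x + 2) - 1) / 2"
    by real_asymp
  then have asymp: "\<forall>\<^sub>F n in sequentially.
      (1/8) * real n / ln (real n) \<le> ((real n - 1) * (1/2) / ln (real n + 2) - 1) / 2"
    using filterlim_real_sequentially unfolding filterlim_iff by fast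
  have query_budget_ge: "(real n - 1) * (1/2) / ln (real n + 2) - 1 \<le> real (query_budget n)"
    if "n \<ge> 1" for n
  proof -
    have "(real n - 1) * (1/2) / ln (real n + 2) \<le> (real n - 1) * ln 2 / ln (real n + 2)"
      using that ln_2_ge_half by (intro divide_right_mono mult_left_mono) auto
    then show ?thesis
      unfolding query_budget_def by linarith
  qed
  from asymp eventually_ge_at_top[of 1] show ?thesis
  proof eventually_elim
    case (elim n)
    with query_budget_ge[of n] show ?case by simp
  qed
qed

lemma bb_complexity_affine_onemax_ge:
  assumes "2 * (n + 2) ^ T \<le> (2::nat) ^ n"
  shows "ennreal (real T / 2) \<le> bb_complexity n (affine_onemax n)"
  unfolding bb_complexity_def
proof (intro INF_greatest)
  fix A
  let ?V = "real ` {0..n}"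
  have card_V: "card ?V = n + 1"
    by (simp add: card_image)
  have "2 * ennreal (real T / 2) = of_nat T"
    using ennreal_mult[of 2 "real T / 2"] by (simp add: ennreal_of_nat_eq_real_of_nat)
  also have "\<dots> \<le> 2 * (SUP z\<in>points n. \<Sum>t. surv A (onemax_towards n z) {z} t [])"
    using assms onemax_towards_range
    by (intro hitting_time_lower_bound[where V = ?V]) (simp_all add: finite_points card_points card_V)
  also have "\<dots> \<le> 2 * (SUP f\<in>affine_onemax n. runtime n A f)"
  proof (intro mult_left_mono SUP_least)
    fix z assume "z \<in> points n"
    then have "(\<Sum>t. surv A (onemax_towards n z) {z} t []) = runtime n A (onemax_towards n z)"
      by (simp add: runtime_def maximizers_onemax_towards)
    also have "\<dots> \<le> (SUP f\<in>affine_onemax n. runtime n A f)"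
      using \<open>z \<in> points n\<close> by (intro SUP_upper onemax_towards_in_affine_onemax)
    finally show "(\<Sum>t. surv A (onemax_towards n z) {z} t []) \<le> \<dots>" .
  qed simp
  finally show "ennreal (real T / 2) \<le> (SUP f\<in>affine_onemax n. runtime n A f)"
    by (simp add: ennreal_mult_le_mult_iff)
qed

theorem theorem3:
  "\<exists>c > 0. \<exists>N. \<forall>n \<ge> N.
     ennreal (c * real n / ln (real n)) \<le> bb_complexity n (affine_onemax n)"
proof -
  obtain N where N: "\<And>n. n \<ge> N \<Longrightarrow> (1/8) * real n / ln (real n) \<le> real (query_budget n) / 2"
    using query_budget_asymp unfolding eventually_sequentially by blast
  have "ennreal ((1/8) * real n / ln (real n)) \<le> bb_complexity n (affine_onemax n)"
    if "n \<ge> max N 1" for n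
  proof -
    have "ennreal ((1/8) * real n / ln (real n)) \<le> ennreal (real (query_budget n) / 2)"
      using N that by (intro ennreal_leI) simp
    also have "\<dots> \<le> bb_complexity n (affine_onemax n)"
      using two_mul_power_query_budget_le that by (intro bb_complexity_affine_onemax_ge) simp
    finally show ?thesis .
  qed
  then show ?thesis
    by (intro exI[of _ "1/8"] conjI exI[of _ "max N 1"]) simp_all
qed

end
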